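(* Let $\mathbb{K}$ be a field of characteristic $2$ and let $(A,\cdot,\{-,-\},(-)^{\{2\}})$ be a restricted Poisson algebra. Then the second cohomology space $\mathrm{H}^2_{\rm PA}(A)$ classifies the infinitesimal deformations of $A$ up to equivalence: assigning to an infinitesimal deformation $(A^t_1,\cdot,\{-,-\}+t\mu_1,(-)^{\{2\}}+t\omega_1)$ the class of $(\mu_1,\omega_1)$ gives a bijection between equivalence classes of infinitesimal deformations and $\mathrm{H}^2_{\rm PA}(A)$.
   Context: $\mathbb{K}$ has characteristic $2$. Restricted Poisson algebra: commutative associative $(A,\cdot)$ with Lie bracket satisfying $\{ab,c\}=a\{b,c\}+b\{a,c\}$, with a map $(-)^{\{2\}}$ making $(A,\{,\})$ a restricted Lie algebra ($(\lambda x)^{\{2\}}=\lambda^2x^{\{2\}}$, $\mathrm{ad}_{x^{\{2\}}}=\mathrm{ad}_x^2$, $(x+y)^{\{2\}}=x^{\{2\}}+y^{\{2\}}+\{x,y\}$) and $(xy)^{\{2\}}=x^2y^{\{2\}}+y^2x^{\{2\}}+xy\{x,y\}$. $\mathfrak{X}^k(A)$: alternating $k$-linear maps $A^k\to A$ that are derivations of $\cdot$ in each argument. $C^1_{\rm PA}(A)=\mathfrak{X}^1(A)$; for $n\ge2$, $C^n_{\rm PA}(A)$ = pairs $(\varphi,\omega)$, $\varphi\in\mathfrak{X}^n(A)$, $\omega:A\times A^{n-2}\to A$ alternating multilinear in last $n-2$ arguments, with $\omega(\lambda x,z)=\lambda^2\omega(x,z)$, $\omega(x+y,z)=\omega(x,z)+\omega(y,z)+\varphi(x,y,z)$,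 $\omega(xy,z)=x^2\omega(y,z)+y^2\omega(x,z)+xy\varphi(x,y,z)$, $\omega(x,..,z_iz_i',..)=z_i\omega(x,..,z_i',..)+z_i'\omega(x,..,z_i,..)$. Differentials: $\mathrm{d}^1\psi=(\mathrm{d}_{\rm CE}\psi,\delta^1\psi)$ with $\mathrm{d}_{\rm CE}\psi(x,y)=\psi(\{x,y\})+\{x,\psi(y)\}+\{y,\psi(x)\}$, $\delta^1\psi(x)=\psi(x^{\{2\}})+\{x,\psi(x)\}$; $\mathrm{d}^2(\varphi,\omega)=(\mathrm{d}_{\rm CE}\varphi,\delta^2\omega)$ with $\mathrm{d}_{\rm CE}\varphi(x,y,z)=\varphi(\{x,y\},z)+\varphi(\{x,z\},y)+\varphi(\{y,z\},x)+\{x,\varphi(y,z)\}+\{y,\varphi(x,z)\}+\{z,\varphi(x,y)\}$ and $\delta^2\omega(x,z)=\{x,\varphi(x,z)\}+\{z,\omega(x)\}+\varphi(x^{\{2\}},z)+\varphi(\{x,z\},x)$. $\mathrm{H}^2_{\rm PA}(A)=\ker\mathrm{d}^2/\mathrm{im}\,\mathrm{d}^1$ in $C^2_{\rm PA}(A)$. Let $\mathbb{K}^t_k=\mathbb{K}[t]/(t^{k+1})$ and $A^t_k=A\otimes\mathbb{K}^t_k$ with the $\mathbb{K}^t_k$-bilinear extension of $\cdot$. A deformation of order $k$ is given by $\mu_{(k)}=\{-,-\}+\sum_{i=1}^kt^i\mu_i$ and $\omega_{(k)}=(-)^{\{2\}}+\sum_{i=1}^kt^i\omega_i$ with $(\mu_i,\omega_i)\in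 C^2_{\rm PA}(A)$, such that $(A^t_k,\mu_{(k)},\omega_{(k)})$ (with $\mu_{(k)}$ extended $\mathbb{K}^t_k$-bilinearly and $\omega_{(k)}$ extended by $\omega(\lambda X)=\lambda^2\omega(X)$, $\omega(X+Y)=\omega(X)+\omega(Y)+\mu(X,Y)$) is a restricted Lie algebra over $\mathbb{K}^t_k$. Infinitesimal means $k=1$. Two deformations of order $k$ are equivalent if there is an isomorphism of restricted Poisson algebras between them of the form $\Psi=\mathrm{id}+\sum_{i\ge1}t^i\psi_i$ with $\psi_i:A\to A$ linear. *)

theory Defs
  imports Main "HOL.Modules" "HOL-Library.Product_Plus"
begin

datatype 'k dual = Dual (re: 'k) (ep: 'k)

instantiation dual :: (comm_ring_1) comm_ring_1
begin
definition "0 = Dual 0 0"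
definition "1 = Dual 1 0"
definition "x + y = Dual (re x + re y) (ep x + ep y)"
definition "x - y = Dual (re x - re y) (ep x - ep y)"
definition "- x = Dual (- re x) (- ep x)"
definition "x * y = Dual (re x * re y) (re x * ep y + ep x * re y)"
instance
  by standard
    (auto simp: zero_dual_def one_dual_def plus_dual_def minus_dual_def
       uminus_dual_def times_dual_def algebra_simps dual.expand)
end

definition restricted_lie ::
  "('r::comm_ring_1 \<Rightarrow> 'm::ab_group_add \<Rightarrow> 'm) \<Rightarrow> ('m \<Rightarrow> 'm \<Rightarrow> 'm) \<Rightarrow> ('m \<Rightarrow> 'm) \<Rightarrow> bool" where
  "restricted_lie sc br p \<longleftrightarrow>
     module sc \<and>
     (\<forall>x y z. br (x + y) z = br x z + br y z) \<and>
     (\<forall>x y z. br x (y + z) = br x y + br x z) \<and>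
     (\<forall>c x y. br (sc c x) y = sc c (br x y)) \<and>
     (\<forall>c x y. br x (sc c y) = sc c (br x y)) \<and>
     (\<forall>x. br x x = 0) \<and>
     (\<forall>x y z. br x (br y z) + br y (br z x) + br z (br x y) = 0) \<and>
     (\<forall>c x. p (sc c x) = sc (c * c) (p x)) \<and>
     (\<forall>x y. br (p x) y = br x (br x y)) \<and>
     (\<forall>x y. p (x + y) = p x + p y + br x y)"

definition comm_algebra :: "('k::field \<Rightarrow> 'a::comm_ring \<Rightarrow> 'a) \<Rightarrow> bool" where
  "comm_algebra sc \<longleftrightarrow> module sc \<and>
     (\<forall>c x y. sc c (x * y) = sc c x * y)"

definition restricted_poisson ::
  "('k::field \<Rightarrow> 'a::comm_ring \<Rightarrow> 'a) \<Rightarrow> ('a \<Rightarrow> 'a \<Rightarrow> 'a) \<Rightarrow> ('a \<Rightarrow> 'a) \<Rightarrow> bool" where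
  "restricted_poisson sc br p \<longleftrightarrow>
     comm_algebra sc \<and> restricted_lie sc br p \<and>
     (\<forall>a b c. br (a * b) c = a * br b c + b * br a c) \<and>
     (\<forall>x y. p (x * y) = x * x * p y + y * y * p x + x * y * br x y)"

definition klinear :: "('k::field \<Rightarrow> 'a::comm_ring \<Rightarrow> 'a) \<Rightarrow> ('a \<Rightarrow> 'a) \<Rightarrow> bool" where
  "klinear sc f \<longleftrightarrow> (\<forall>x y. f (x + y) = f x + f y) \<and> (\<forall>c x. f (sc c x) = sc c (f x))"

definition derivation :: "('k::field \<Rightarrow> 'a::comm_ring \<Rightarrow> 'a) \<Rightarrow> ('a \<Rightarrow> 'a) \<Rightarrow> bool" where
  "derivation sc f \<longleftrightarrow> klinear sc f \<and> (\<forall>x y. f (x * y) = x * f y + y * f x)"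

definition X2 :: "('k::field \<Rightarrow> 'a::comm_ring \<Rightarrow> 'a) \<Rightarrow> ('a \<Rightarrow> 'a \<Rightarrow> 'a) \<Rightarrow> bool" where
  "X2 sc \<phi> \<longleftrightarrow> (\<forall>x. \<phi> x x = 0) \<and>
     (\<forall>z. derivation sc (\<lambda>x. \<phi> x z)) \<and> (\<forall>x. derivation sc (\<lambda>z. \<phi> x z))"

definition C2 :: "('k::field \<Rightarrow> 'a::comm_ring \<Rightarrow> 'a) \<Rightarrow> (('a \<Rightarrow> 'a \<Rightarrow> 'a) \<times> ('a \<Rightarrow> 'a)) set" where
  "C2 sc = {(\<phi>, \<omega>). X2 sc \<phi> \<and>
     (\<forall>c x. \<omega> (sc c x) = sc (c * c) (\<omega> x)) \<and>
     (\<forall>x y. \<omega> (x + y) = \<omega> x + \<omega> y + \<phi> x y) \<and>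
     (\<forall>x y. \<omega> (x * y) = x * x * \<omega> y + y * y * \<omega> x + x * y * \<phi> x y)}"

definition dCE1 :: "('a \<Rightarrow> 'a \<Rightarrow> 'a::comm_ring) \<Rightarrow> ('a \<Rightarrow> 'a) \<Rightarrow> 'a \<Rightarrow> 'a \<Rightarrow> 'a" where
  "dCE1 br \<psi> x y = \<psi> (br x y) + br x (\<psi> y) + br y (\<psi> x)"

definition delta1 :: "('a \<Rightarrow> 'a \<Rightarrow> 'a::comm_ring) \<Rightarrow> ('a \<Rightarrow> 'a) \<Rightarrow> ('a \<Rightarrow> 'a) \<Rightarrow> 'a \<Rightarrow> 'a" where
  "delta1 br p \<psi> x = \<psi> (p x) + br x (\<psi> x)"

definition dCE2 :: "('a \<Rightarrow> 'a \<Rightarrow> 'a::comm_ring) \<Rightarrow> ('a \<Rightarrow> 'a \<Rightarrow> 'a) \<Rightarrow> 'a \<Rightarrow> 'a \<Rightarrow> 'a \<Rightarrow> 'a" where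
  "dCE2 br \<phi> x y z = \<phi> (br x y) z + \<phi> (br x z) y + \<phi> (br y z) x
     + br x (\<phi> y z) + br y (\<phi> x z) + br z (\<phi> x y)"

definition delta2 :: "('a \<Rightarrow> 'a \<Rightarrow> 'a::comm_ring) \<Rightarrow> ('a \<Rightarrow> 'a) \<Rightarrow> ('a \<Rightarrow> 'a \<Rightarrow> 'a) \<Rightarrow> ('a \<Rightarrow> 'a) \<Rightarrow> 'a \<Rightarrow> 'a \<Rightarrow> 'a" where
  "delta2 br p \<phi> \<omega> x z = br x (\<phi> x z) + br z (\<omega> x) + \<phi> (p x) z + \<phi> (br x z) x"

definition Z2 :: "('k::field \<Rightarrow> 'a::comm_ring \<Rightarrow> 'a) \<Rightarrow> ('a \<Rightarrow> 'a \<Rightarrow> 'a) \<Rightarrow> ('a \<Rightarrow> 'a)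
    \<Rightarrow> (('a \<Rightarrow> 'a \<Rightarrow> 'a) \<times> ('a \<Rightarrow> 'a)) set" where
  "Z2 sc br p = {(\<phi>, \<omega>) \<in> C2 sc. dCE2 br \<phi> = (\<lambda>x y z. 0) \<and> delta2 br p \<phi> \<omega> = (\<lambda>x z. 0)}"

definition coh_rel :: "('k::field \<Rightarrow> 'a::comm_ring \<Rightarrow> 'a) \<Rightarrow> ('a \<Rightarrow> 'a \<Rightarrow> 'a) \<Rightarrow> ('a \<Rightarrow> 'a)
    \<Rightarrow> ((('a \<Rightarrow> 'a \<Rightarrow> 'a) \<times> ('a \<Rightarrow> 'a)) \<times> (('a \<Rightarrow> 'a \<Rightarrow> 'a) \<times> ('a \<Rightarrow> 'a))) set" where
  "coh_rel sc br p = {((\<phi>, \<omega>), (\<phi>', \<omega>')).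
     (\<phi>, \<omega>) \<in> Z2 sc br p \<and> (\<phi>', \<omega>') \<in> Z2 sc br p \<and>
     (\<exists>\<psi>. derivation sc \<psi> \<and>
        (\<lambda>x y. \<phi> x y - \<phi>' x y) = dCE1 br \<psi> \<and> (\<lambda>x. \<omega> x - \<omega>' x) = delta1 br p \<psi>)}"

definition H2 :: "('k::field \<Rightarrow> 'a::comm_ring \<Rightarrow> 'a) \<Rightarrow> ('a \<Rightarrow> 'a \<Rightarrow> 'a) \<Rightarrow> ('a \<Rightarrow> 'a)
    \<Rightarrow> (('a \<Rightarrow> 'a \<Rightarrow> 'a) \<times> ('a \<Rightarrow> 'a)) set set" where
  "H2 sc br p = Z2 sc br p // coh_rel sc br p"

text \<open>A^t_1 = A \<otimes> K[t]/(t^2) is represented by pairs (a, b) meaning a + t b.\<close>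

definition dual_scale :: "('k::field \<Rightarrow> 'a::comm_ring \<Rightarrow> 'a) \<Rightarrow> 'k dual \<Rightarrow> 'a \<times> 'a \<Rightarrow> 'a \<times> 'a" where
  "dual_scale sc l X = (sc (re l) (fst X), sc (re l) (snd X) + sc (ep l) (fst X))"

definition t_mult :: "'a::comm_ring \<times> 'a \<Rightarrow> 'a \<times> 'a \<Rightarrow> 'a \<times> 'a" where
  "t_mult X Y = (fst X * fst Y, fst X * snd Y + snd X * fst Y)"

text \<open>mu_(1) = {-,-} + t mu_1, extended K^t_1-bilinearly.\<close>
definition t_bracket :: "('a \<Rightarrow> 'a \<Rightarrow> 'a::comm_ring) \<Rightarrow> ('a \<Rightarrow> 'a \<Rightarrow> 'a) \<Rightarrow> 'a \<times> 'a \<Rightarrow> 'a \<times> 'a \<Rightarrow> 'a \<times> 'a" where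
  "t_bracket br \<mu> X Y = (br (fst X) (fst Y),
       br (fst X) (snd Y) + br (snd X) (fst Y) + \<mu> (fst X) (fst Y))"

text \<open>omega_(1) = (-)^[2] + t omega_1, extended by omega(lambda X) = lambda^2 omega(X) and
  omega(X+Y) = omega X + omega Y + mu(X,Y):  omega(a + t b) = a^[2] + t (omega_1 a + {a,b}).\<close>
definition t_pmap :: "('a \<Rightarrow> 'a \<Rightarrow> 'a::comm_ring) \<Rightarrow> ('a \<Rightarrow> 'a) \<Rightarrow> ('a \<Rightarrow> 'a) \<Rightarrow> 'a \<times> 'a \<Rightarrow> 'a \<times> 'a" where
  "t_pmap br p \<omega> X = (p (fst X), \<omega> (fst X) + br (fst X) (snd X))"

definition inf_deformations :: "('k::field \<Rightarrow> 'a::comm_ring \<Rightarrow> 'a) \<Rightarrow> ('a \<Rightarrow> 'a \<Rightarrow> 'a) \<Rightarrow> ('a \<Rightarrow> 'a)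
    \<Rightarrow> (('a \<Rightarrow> 'a \<Rightarrow> 'a) \<times> ('a \<Rightarrow> 'a)) set" where
  "inf_deformations sc br p = {(\<mu>, \<omega>). (\<mu>, \<omega>) \<in> C2 sc \<and>
     restricted_lie (dual_scale sc) (t_bracket br \<mu>) (t_pmap br p \<omega>)}"

text \<open>Psi = id + t psi_1, extended K^t_1-linearly: Psi(a + t b) = a + t (b + psi_1 a).\<close>
definition t_Psi :: "('a::comm_ring \<Rightarrow> 'a) \<Rightarrow> 'a \<times> 'a \<Rightarrow> 'a \<times> 'a" where
  "t_Psi \<psi> X = (fst X, snd X + \<psi> (fst X))"

definition deformation_equiv :: "('k::field \<Rightarrow> 'a::comm_ring \<Rightarrow> 'a) \<Rightarrow> ('a \<Rightarrow> 'a \<Rightarrow> 'a) \<Rightarrow> ('a \<Rightarrow> 'a)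
    \<Rightarrow> ((('a \<Rightarrow> 'a \<Rightarrow> 'a) \<times> ('a \<Rightarrow> 'a)) \<times> (('a \<Rightarrow> 'a \<Rightarrow> 'a) \<times> ('a \<Rightarrow> 'a))) set" where
  "deformation_equiv sc br p = {((\<mu>, \<omega>), (\<mu>', \<omega>')).
     (\<mu>, \<omega>) \<in> inf_deformations sc br p \<and> (\<mu>', \<omega>') \<in> inf_deformations sc br p \<and>
     (\<exists>\<psi>. klinear sc \<psi> \<and>
        bij (t_Psi \<psi>) \<and>
        (\<forall>X Y. t_Psi \<psi> (t_mult X Y) = t_mult (t_Psi \<psi> X) (t_Psi \<psi> Y)) \<and>
        (\<forall>X Y. t_Psi \<psi> (t_bracket br \<mu> X Y) = t_bracket br \<mu>' (t_Psi \<psi> X) (t_Psi \<psi> Y)) \<and>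
        (\<forall>X. t_Psi \<psi> (t_pmap br p \<omega> X) = t_pmap br p \<omega>' (t_Psi \<psi> X)))}"

end

theory Submission
  imports Defs
begin

(* Expanding the restricted Lie axioms of A[t]/(t^2) at order t, the Jacobi identity becomes
   d_CE mu = 0 and the axiom ad_(x^[2]) = ad_x^2 becomes delta^2 omega = 0, while all other
   axioms are the defining conditions of C^2_PA; so infinitesimal deformations are exactly the
   2-cocycles. Likewise id + t psi is multiplicative iff psi is a derivation, and it intertwines
   two deformations iff their difference is d^1 psi; so equivalence of deformations is
   cohomology of cocycles, and the bijection is the identity on classes. *)

definition jacobiator :: "('m \<Rightarrow> 'm \<Rightarrow> 'm::plus) \<Rightarrow> 'm \<Rightarrow> 'm \<Rightarrow> 'm \<Rightarrow> 'm" where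
  "jacobiator b x y z = b x (b y z) + b y (b z x) + b z (b x y)"

lemma alternating_biadditive_antisym:
  fixes f :: "'a::ab_group_add \<Rightarrow> 'a \<Rightarrow> 'b::ab_group_add"
  assumes add_left: "\<And>x y z. f (x + y) z = f x z + f y z"
    and add_right: "\<And>x y z. f x (y + z) = f x y + f x z"
    and self: "\<And>x. f x x = 0"
  shows "f x y = - f y x"
proof -
  have "0 = f (x + y) (x + y)" by (rule self[symmetric])
  also have "\<dots> = f x x + f y x + (f x y + f y y)" by (simp only: add_left add_right)
  also have "\<dots> = f x y + f y x" by (simp add: self)
  finally show ?thesis by (metis add_eq_0_iff2)
qed

lemma X2_add_left: "X2 sc \<mu> \<Longrightarrow> \<mu> (x + y) z = \<mu> x z + \<mu> y z"
  and X2_add_right: "X2 sc \<mu> \<Longrightarrow> \<mu> z (x + y) = \<mu> z x + \<mu> z y"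
  and X2_scale_left: "X2 sc \<mu> \<Longrightarrow> \<mu> (sc c x) z = sc c (\<mu> x z)"
  and X2_scale_right: "X2 sc \<mu> \<Longrightarrow> \<mu> z (sc c x) = sc c (\<mu> z x)"
  and X2_self: "X2 sc \<mu> \<Longrightarrow> \<mu> x x = 0"
  unfolding X2_def derivation_def klinear_def by auto

lemma dual_scale_module:
  assumes "module sc"
  shows "module (dual_scale sc)"
proof -
  interpret module sc by fact
  show ?thesis
    by unfold_locales
      (auto simp: dual_scale_def plus_dual_def times_dual_def one_dual_def algebra_simps)
qed

lemma bij_t_Psi: "bij (t_Psi \<psi>)"
proof (rule bijI)
  show "inj (t_Psi \<psi>)"
    by (rule injI) (auto simp: t_Psi_def prod_eq_iff)
  show "surj (t_Psi \<psi>)"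
  proof (rule surjI)
    fix Y :: "'a \<times> 'a"
    show "t_Psi \<psi> (fst Y, snd Y - \<psi> (fst Y)) = Y" by (simp add: t_Psi_def)
  qed
qed

lemma t_Psi_mult_iff:
  "(\<forall>X Y. t_Psi \<psi> (t_mult X Y) = t_mult (t_Psi \<psi> X) (t_Psi \<psi> Y))
     \<longleftrightarrow> (\<forall>x y. \<psi> (x * y) = x * \<psi> y + y * \<psi> x)"
  by (auto simp: t_Psi_def t_mult_def algebra_simps)

locale char2_restricted_lie =
  fixes sc :: "'k::field \<Rightarrow> 'a::comm_ring \<Rightarrow> 'a"
    and br :: "'a \<Rightarrow> 'a \<Rightarrow> 'a"
    and p :: "'a \<Rightarrow> 'a"
  assumes CHAR_2: "CHAR('k) = 2"
    and restricted_lie: "restricted_lie sc br p"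
begin

lemma module_sc: "module sc"
  and bracket_add_left: "br (x + y) z = br x z + br y z"
  and bracket_add_right: "br x (y + z) = br x y + br x z"
  and bracket_scale_left: "br (sc c x) y = sc c (br x y)"
  and bracket_scale_right: "br x (sc c y) = sc c (br x y)"
  and bracket_self: "br x x = 0"
  and jacobi: "jacobiator br x y z = 0"
  and pmap_scale: "p (sc c x) = sc (c * c) (p x)"
  and bracket_pmap_left: "br (p x) y = br x (br x y)"
  and pmap_add: "p (x + y) = p x + p y + br x y"
  using restricted_lie unfolding restricted_lie_def jacobiator_def by simp_all

lemma field_add_self: "(c::'k) + c = 0"
  by (metis add_eq_0_iff2 uminus_CHAR_2[OF CHAR_2])

lemma uminus_eq_self: "- (x::'a) = x"
proof -
  interpret module sc by (rule module_sc)
  have "- x = sc (- 1) x" by simp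
  also have "\<dots> = x" by (simp add: uminus_CHAR_2[OF CHAR_2])
  finally show ?thesis .
qed

lemma add_self: "(x::'a) + x = 0"
  by (simp add: add_eq_0_iff2 uminus_eq_self)

lemma add_self_left: "(x::'a) + (x + y) = y"
  by (simp add: add.assoc[symmetric] add_self)

lemma diff_eq_add: "(x::'a) - y = x + y"
  by (simp add: uminus_eq_self)

lemma eq_iff_add_eq_0: "(x::'a) = y \<longleftrightarrow> x + y = 0"
  by (simp add: add_eq_0_iff2 uminus_eq_self)

lemma pair_eq_iff_add_eq_0: "(X::'a \<times> 'a) = Y \<longleftrightarrow> X + Y = 0"
  by (simp add: prod_eq_iff eq_iff_add_eq_0[of "fst X"] eq_iff_add_eq_0[of "snd X"])

lemmas char2_simps = add_ac add_self add_self_left uminus_eq_self diff_eq_add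

lemma bracket_commute: "br x y = br y x"
  using alternating_biadditive_antisym[of br, OF bracket_add_left bracket_add_right bracket_self]
  by (simp add: uminus_eq_self)

lemma X2_commute:
  assumes "X2 sc \<mu>"
  shows "\<mu> x y = \<mu> y x"
  using alternating_biadditive_antisym[of \<mu>,
      OF X2_add_left[OF assms] X2_add_right[OF assms] X2_self[OF assms]]
  by (simp add: uminus_eq_self)

lemma bracket_pmap_right: "br y (p x) = br x (br x y)"
  by (simp add: bracket_commute[of y] bracket_pmap_left)

lemmas bracket_simps = bracket_add_left bracket_add_right bracket_commute
lemmas X2_simps = X2_add_left X2_add_right X2_self X2_commute

lemma jacobiator_t_bracket:
  assumes "X2 sc \<mu>"
  shows "jacobiator (t_bracket br \<mu>) (a, a') (b, b') (c, c') = (0, dCE2 br \<mu> a b c)"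
    (is "?J = _")
proof -
  have "snd ?J = jacobiator br a b c' + jacobiator br a b' c + jacobiator br a' b c + dCE2 br \<mu> a b c"
    using assms
    by (simp add: jacobiator_def t_bracket_def dCE2_def char2_simps bracket_simps X2_simps)
  moreover have "fst ?J = jacobiator br a b c"
    by (simp add: jacobiator_def t_bracket_def)
  ultimately show ?thesis
    by (simp add: prod_eq_iff jacobi)
qed

lemma t_bracket_jacobi_iff:
  assumes "X2 sc \<mu>"
  shows "(\<forall>X Y Z. jacobiator (t_bracket br \<mu>) X Y Z = 0) \<longleftrightarrow> dCE2 br \<mu> = (\<lambda>x y z. 0)"
  by (simp add: jacobiator_t_bracket[OF assms] fun_eq_iff zero_prod_def)

lemma t_bracket_t_pmap_left:
  assumes "X2 sc \<mu>"
  shows "t_bracket br \<mu> (t_pmap br p \<omega> (a, b)) (c, d)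
      + t_bracket br \<mu> (a, b) (t_bracket br \<mu> (a, b) (c, d)) = (0, delta2 br p \<mu> \<omega> a c)"
    (is "?L = _")
proof -
  have "snd ?L = jacobiator br a b c + delta2 br p \<mu> \<omega> a c"
    using assms
    by (simp add: jacobiator_def t_bracket_def t_pmap_def delta2_def bracket_pmap_left
        bracket_pmap_right char2_simps bracket_simps X2_simps)
  moreover have "fst ?L = 0"
    by (simp add: t_bracket_def t_pmap_def bracket_pmap_left add_self)
  ultimately show ?thesis
    by (simp add: prod_eq_iff jacobi)
qed

lemma t_pmap_adjoint_iff:
  assumes "X2 sc \<mu>"
  shows "(\<forall>X Y. t_bracket br \<mu> (t_pmap br p \<omega> X) Y = t_bracket br \<mu> X (t_bracket br \<mu> X Y))
    \<longleftrightarrow> delta2 br p \<mu> \<omega> = (\<lambda>x z. 0)"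
proof -
  have "t_bracket br \<mu> (t_pmap br p \<omega> X) Y = t_bracket br \<mu> X (t_bracket br \<mu> X Y)
      \<longleftrightarrow> delta2 br p \<mu> \<omega> (fst X) (fst Y) = 0" for X Y
    by (cases X, cases Y)
      (subst pair_eq_iff_add_eq_0, simp add: t_bracket_t_pmap_left[OF assms] zero_prod_def)
  then show ?thesis
    by (simp add: fun_eq_iff)
qed

lemma restricted_lie_deformation_iff:
  assumes "(\<mu>, \<omega>) \<in> C2 sc"
  shows "restricted_lie (dual_scale sc) (t_bracket br \<mu>) (t_pmap br p \<omega>)
    \<longleftrightarrow> dCE2 br \<mu> = (\<lambda>x y z. 0) \<and> delta2 br p \<mu> \<omega> = (\<lambda>x z. 0)"
proof -
  from assms have \<mu>: "X2 sc \<mu>"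
    and \<omega>_scale: "\<And>c x. \<omega> (sc c x) = sc (c * c) (\<omega> x)"
    and \<omega>_add: "\<And>x y. \<omega> (x + y) = \<omega> x + \<omega> y + \<mu> x y"
    unfolding C2_def by auto
  interpret module sc by (rule module_sc)
  have "t_bracket br \<mu> (X + Y) Z = t_bracket br \<mu> X Z + t_bracket br \<mu> Y Z"
    and "t_bracket br \<mu> X (Y + Z) = t_bracket br \<mu> X Y + t_bracket br \<mu> X Z"
    and "t_bracket br \<mu> (dual_scale sc c X) Y = dual_scale sc c (t_bracket br \<mu> X Y)"
    and "t_bracket br \<mu> X (dual_scale sc c Y) = dual_scale sc c (t_bracket br \<mu> X Y)"
    and "t_bracket br \<mu> X X = 0"
    and "t_pmap br p \<omega> (dual_scale sc c X) = dual_scale sc (c * c) (t_pmap br p \<omega> X)"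
    and "t_pmap br p \<omega> (X + Y) = t_pmap br p \<omega> X + t_pmap br p \<omega> Y + t_bracket br \<mu> X Y"
    for X Y Z c
    by (simp_all add: t_bracket_def t_pmap_def dual_scale_def prod_eq_iff times_dual_def
        char2_simps bracket_simps X2_simps[OF \<mu>] bracket_scale_left bracket_scale_right
        X2_scale_left[OF \<mu>] X2_scale_right[OF \<mu>] bracket_self pmap_scale pmap_add
        \<omega>_scale \<omega>_add scale_right_distrib mult.commute[of "ep c"] field_add_self)
  then show ?thesis
    using dual_scale_module[OF module_sc]
    unfolding restricted_lie_def t_bracket_jacobi_iff[OF \<mu>, symmetric]
      t_pmap_adjoint_iff[OF \<mu>, symmetric] jacobiator_def
    by auto
qed

lemma inf_deformations_eq_Z2: "inf_deformations sc br p = Z2 sc br p"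
  unfolding inf_deformations_def Z2_def by (auto simp: restricted_lie_deformation_iff)

lemma t_Psi_bracket_iff:
  "(\<forall>X Y. t_Psi \<psi> (t_bracket br \<mu> X Y) = t_bracket br \<mu>' (t_Psi \<psi> X) (t_Psi \<psi> Y))
     \<longleftrightarrow> (\<lambda>x y. \<mu> x y - \<mu>' x y) = dCE1 br \<psi>"
proof -
  have "t_Psi \<psi> (t_bracket br \<mu> (a, b) (c, d))
        = t_bracket br \<mu>' (t_Psi \<psi> (a, b)) (t_Psi \<psi> (c, d))
      \<longleftrightarrow> \<mu> a c - \<mu>' a c = dCE1 br \<psi> a c" for a b c d
    by (subst pair_eq_iff_add_eq_0, subst eq_iff_add_eq_0[of "\<mu> a c - \<mu>' a c"])
      (simp add: t_Psi_def t_bracket_def dCE1_def zero_prod_def char2_simps bracket_simps)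
  then show ?thesis
    by (simp add: fun_eq_iff)
qed

lemma t_Psi_pmap_iff:
  "(\<forall>X. t_Psi \<psi> (t_pmap br p \<omega> X) = t_pmap br p \<omega>' (t_Psi \<psi> X))
     \<longleftrightarrow> (\<lambda>x. \<omega> x - \<omega>' x) = delta1 br p \<psi>"
proof -
  have "t_Psi \<psi> (t_pmap br p \<omega> (a, b)) = t_pmap br p \<omega>' (t_Psi \<psi> (a, b))
      \<longleftrightarrow> \<omega> a - \<omega>' a = delta1 br p \<psi> a" for a b
    by (subst pair_eq_iff_add_eq_0, subst eq_iff_add_eq_0[of "\<omega> a - \<omega>' a"])
      (simp add: t_Psi_def t_pmap_def delta1_def zero_prod_def char2_simps bracket_simps)
  then show ?thesis
    by (simp add: fun_eq_iff)
qed

lemma deformation_equiv_eq_coh_rel: "deformation_equiv sc br p = coh_rel sc br p"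
  unfolding deformation_equiv_def coh_rel_def inf_deformations_eq_Z2 derivation_def
    t_Psi_mult_iff t_Psi_bracket_iff t_Psi_pmap_iff
  by (simp add: bij_t_Psi)

end

theorem mainTheorem6:
  fixes sc :: "'k::field \<Rightarrow> 'a::comm_ring \<Rightarrow> 'a"
    and br :: "'a \<Rightarrow> 'a \<Rightarrow> 'a"
    and p :: "'a \<Rightarrow> 'a"
  assumes "CHAR('k) = 2"
    and "restricted_poisson sc br p"
  shows "\<exists>F. bij_betw F (inf_deformations sc br p // deformation_equiv sc br p) (H2 sc br p) \<and>
           (\<forall>D \<in> inf_deformations sc br p.
              F (deformation_equiv sc br p `` {D}) = coh_rel sc br p `` {D})"
proof -
  interpret char2_restricted_lie sc br p
    using assms by unfold_locales (simp_all add: restricted_poisson_def)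
  show ?thesis
    by (intro exI[of _ id])
      (simp add: H2_def inf_deformations_eq_Z2 deformation_equiv_eq_coh_rel bij_betw_id)
qed

end
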